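(* Let $q$ be a power of $2$, $a\in\mathbb{F}_q$, and $n\ge1$ an integer with $\gcd(n+1,q)=1$. Then $n$ is even, and the code $C_n(a)$ is LCD if and only if $$a\notin\{-1+\theta^i+\theta^{-i} : 1\le i\le n/2\},$$ where $\theta\in\overline{\mathbb{F}}_q$ is a primitive $(n+1)$-th root of unity.
   Context: For $a\in\mathbb{F}_q$ and $n \ge 1$, $T_n(a)$ denotes the $n\times n$ symmetric tridiagonal Toeplitz matrix over $\mathbb{F}_q$ with all diagonal entries equal to $a$, all entries on the first super- and sub-diagonals equal to $1$, and all other entries $0$. $C_n(a)$ is the $[2n,n]$ linear code over $\mathbb{F}_q$ with generator matrix $[I_n \mid T_n(a)]$. A linear code $C$ is LCD (linear complementary dual) if $C\cap C^\perp=\{0\}$, where $C^\perp$ is the dual with respect to the standard Euclidean inner product. *)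

theory Defs
  imports "HOL-Algebra.Algebraic_Closure_Type"
begin

text \<open>Vectors of length m over a field are modelled as functions nat => 'a
  vanishing at all indices >= m; matrices as functions nat => nat => 'a.\<close>

definition vecs :: "nat \<Rightarrow> (nat \<Rightarrow> 'a::zero) set" where
  "vecs m = {x. \<forall>i\<ge>m. x i = 0}"

definition tridiag :: "nat \<Rightarrow> 'a::field \<Rightarrow> nat \<Rightarrow> nat \<Rightarrow> 'a" where
  "tridiag n a i j =
     (if i < n \<and> j < n then
        (if i = j then a else if i = j + 1 \<or> j = i + 1 then 1 else 0)
      else 0)"

definition genmat :: "nat \<Rightarrow> 'a::field \<Rightarrow> nat \<Rightarrow> nat \<Rightarrow> 'a" where
  "genmat n a i j =
     (if i < n \<and> j < 2 * n then
        (if j < n then (if i = j then 1 else 0) else tridiag n a i (j - n))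
      else 0)"

definition row_code :: "nat \<Rightarrow> nat \<Rightarrow> (nat \<Rightarrow> nat \<Rightarrow> 'a::field) \<Rightarrow> (nat \<Rightarrow> 'a) set" where
  "row_code k m G = {x. \<exists>u \<in> vecs k. x = (\<lambda>j. if j < m then (\<Sum>i<k. u i * G i j) else 0)}"

definition Ccode :: "nat \<Rightarrow> 'a::field \<Rightarrow> (nat \<Rightarrow> 'a) set" where
  "Ccode n a = row_code n (2 * n) (genmat n a)"

definition dual_code :: "nat \<Rightarrow> (nat \<Rightarrow> 'a::field) set \<Rightarrow> (nat \<Rightarrow> 'a) set" where
  "dual_code m C = {y \<in> vecs m. \<forall>x\<in>C. (\<Sum>i<m. x i * y i) = 0}"

definition is_LCD :: "nat \<Rightarrow> (nat \<Rightarrow> 'a::field) set \<Rightarrow> bool" where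
  "is_LCD m C \<longleftrightarrow> C \<inter> dual_code m C = {(\<lambda>_. 0)}"

definition primitive_root_of_unity :: "nat \<Rightarrow> 'a::field \<Rightarrow> bool" where
  "primitive_root_of_unity k \<theta> \<longleftrightarrow> \<theta> ^ k = 1 \<and> (\<forall>j. 0 < j \<and> j < k \<longrightarrow> \<theta> ^ j \<noteq> 1)"

end

theory Submission
  imports Defs "HOL-Number_Theory.Residues"
begin

text \<open>
  The Euclidean inner product of the codewords \<open>u[I | T]\<close> and \<open>v[I | T]\<close> is
  \<open>v (I + T^2) u^T\<close>, so \<open>C\<^sub>n(a)\<close> is LCD iff \<open>I + T\<^sub>n(a)^2\<close> is nonsingular.
  Since \<open>q\<close> is a power of 2 the field has characteristic 2, where
  \<open>I + T\<^sub>n(a)^2 = T\<^sub>n(a + 1)^2\<close>.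
  A kernel vector of \<open>T\<^sub>n(b)\<close> is determined by its first entry through the three-term
  recurrence of the Dickson polynomials \<open>E\<^sub>k(-b)\<close>, so \<open>T\<^sub>n(b)\<close> is singular iff
  \<open>E\<^sub>n(-b) = 0\<close>. Over the algebraic closure write \<open>b = y + 1/y\<close>; then
  \<open>E\<^sub>n(b) (y - 1/y) = y^(n+1) - y^-(n+1)\<close>, and in characteristic 2 with \<open>n\<close> even
  (forced by \<open>gcd(n + 1, q) = 1\<close>) this vanishes exactly when \<open>y\<close> is an \<open>(n + 1)\<close>-th root of
  unity other than 1. Pairing \<open>\<theta>^j\<close> with \<open>\<theta>^(n+1-j)\<close> yields the stated set.
\<close>

section \<open>Characteristic 2\<close>

lemma CHAR_eq_2_if_card_eq_power_2:
  assumes "card (UNIV :: 'a::{finite,field} set) = 2 ^ m"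
  shows "CHAR('a) = 2"
proof -
  have "prime CHAR('a)"
    by (simp add: finite_imp_CHAR_pos prime_CHAR_semidom)
  moreover have "CHAR('a) dvd 2 ^ m"
    using CHAR_dvd_CARD[where 'a='a] assms by simp
  ultimately show ?thesis
    using prime_dvd_power primes_dvd_imp_eq two_is_prime_nat by blast
qed

lemma even_if_coprime_card_CHAR_2:
  assumes "CHAR('a::{finite,ring_1}) = 2" and "coprime (n + 1) (card (UNIV :: 'a set))"
  shows "even n"
proof -
  have "2 dvd card (UNIV :: 'a set)"
    using CHAR_dvd_CARD[where 'a='a] assms(1) by simp
  with assms(2) have "odd (n + 1)"
    using coprime_common_divisor_nat by fastforce
  then show ?thesis
    by simp
qed

lemma add_eq_0_iff_CHAR_2:
  fixes x y :: "'a::ring_1"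
  assumes "CHAR('a) = 2"
  shows "x + y = 0 \<longleftrightarrow> x = y"
  by (auto simp: add_eq_0_iff uminus_CHAR_2[OF assms])

lemma two_eq_0_CHAR_2:
  assumes "CHAR('a::semiring_1) = 2"
  shows "(2::'a) = 0"
  using of_nat_CHAR[where 'a='a] assms by simp

lemma square_eq_1_iff_CHAR_2:
  fixes z :: "'a::ring_1_no_zero_divisors"
  assumes "CHAR('a) = 2"
  shows "z * z = 1 \<longleftrightarrow> z = 1"
  using square_eq_1_iff[of z] uminus_CHAR_2[OF assms, of 1] by simp

lemma add_inverse_eq_0_iff_CHAR_2:
  fixes y :: "'a::field"
  assumes "CHAR('a) = 2" and "y \<noteq> 0"
  shows "y + inverse y = 0 \<longleftrightarrow> y = 1"
proof -
  have "y = inverse y \<longleftrightarrow> y * y = 1"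
    using assms(2) by (auto simp: field_simps)
  then show ?thesis
    by (simp add: add_eq_0_iff_CHAR_2[OF assms(1)] square_eq_1_iff_CHAR_2[OF assms(1)])
qed

section \<open>The code \<open>C\<^sub>n(a)\<close> and its LCD criterion\<close>

lemma vecs_eq_0_iff: "v \<in> vecs n \<Longrightarrow> v = (\<lambda>_. 0) \<longleftrightarrow> (\<forall>i<n. v i = 0)"
  by (auto simp: vecs_def fun_eq_iff not_less[symmetric])

definition tridiag_mult :: "nat \<Rightarrow> 'a::field \<Rightarrow> (nat \<Rightarrow> 'a) \<Rightarrow> nat \<Rightarrow> 'a" where
  "tridiag_mult n a u j = (\<Sum>i<n. u i * tridiag n a i j)"

lemma tridiag_mult_in_vecs: "tridiag_mult n a u \<in> vecs n"
  by (simp add: vecs_def tridiag_mult_def tridiag_def)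

lemma tridiag_mult_zero [simp]: "tridiag_mult n a (\<lambda>_. 0) = (\<lambda>_. 0)"
  by (simp add: tridiag_mult_def fun_eq_iff)

lemma tridiag_mult_add:
  "tridiag_mult n a (\<lambda>i. u i + w i) = (\<lambda>j. tridiag_mult n a u j + tridiag_mult n a w j)"
  by (simp add: tridiag_mult_def fun_eq_iff sum.distrib distrib_right)

lemma tridiag_mult_add_diag:
  assumes "u \<in> vecs n"
  shows "tridiag_mult n (a + c) u = (\<lambda>j. c * u j + tridiag_mult n a u j)"
proof
  fix j
  have "tridiag_mult n (a + c) u j
      = (\<Sum>i<n. u i * tridiag n a i j + (if i = j \<and> j < n then u i * c else 0))"
    unfolding tridiag_mult_def by (intro sum.cong) (auto simp: tridiag_def algebra_simps)
  also have "\<dots> = tridiag_mult n a u j + (\<Sum>i<n. if i = j \<and> j < n then u i * c else 0)"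
    by (simp add: tridiag_mult_def sum.distrib)
  also have "\<dots> = c * u j + tridiag_mult n a u j"
    using assms by (cases "j < n") (auto simp: vecs_def mult.commute)
  finally show "tridiag_mult n (a + c) u j = c * u j + tridiag_mult n a u j" .
qed

lemma tridiag_mult_nth:
  assumes "u \<in> vecs n" and "i < n"
  shows "tridiag_mult n b u i = b * u i + (if i = 0 then 0 else u (i - 1)) + u (Suc i)"
proof -
  have "tridiag_mult n b u i = (\<Sum>j<n. (if j = i then u j * b else 0)
      + (if Suc j = i then u j else 0) + (if j = Suc i then u j else 0))"
    unfolding tridiag_mult_def using assms(2) by (intro sum.cong) (auto simp: tridiag_def)
  also have "\<dots> = (\<Sum>j<n. if j = i then u j * b else 0)
      + (\<Sum>j<n. if Suc j = i then u j else 0) + (\<Sum>j<n. if j = Suc i then u j else 0)"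
    by (simp only: sum.distrib)
  also have "(\<Sum>j<n. if Suc j = i then u j else 0) = (if i = 0 then 0 else u (i - 1))"
    using assms(2) by (cases i) auto
  also have "(\<Sum>j<n. if j = Suc i then u j else 0) = u (Suc i)"
    using assms by (auto simp: vecs_def)
  finally show ?thesis
    using assms(2) by (simp add: mult.commute)
qed

lemma tridiag_sym: "tridiag n a i j = tridiag n a j i"
  by (auto simp: tridiag_def)

definition encode :: "nat \<Rightarrow> 'a::field \<Rightarrow> (nat \<Rightarrow> 'a) \<Rightarrow> nat \<Rightarrow> 'a" where
  "encode n a u j = (if j < n then u j else if j < 2 * n then tridiag_mult n a u (j - n) else 0)"

lemma Ccode_eq_image: "Ccode n a = encode n a ` vecs n"
proof -
  have "(\<lambda>j. if j < 2 * n then \<Sum>i<n. u i * genmat n a i j else 0) = encode n a u" for u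
  proof
    fix j
    show "(if j < 2 * n then \<Sum>i<n. u i * genmat n a i j else 0) = encode n a u j"
    proof (cases "j < n")
      case True
      then have "(\<Sum>i<n. u i * genmat n a i j) = (\<Sum>i<n. if i = j then u j else 0)"
        by (intro sum.cong) (auto simp: genmat_def)
      with True show ?thesis
        by (simp add: encode_def)
    next
      case False
      then show ?thesis
        by (auto simp: encode_def tridiag_mult_def genmat_def intro: sum.cong)
    qed
  qed
  then show ?thesis
    unfolding Ccode_def row_code_def by auto
qed

lemma encode_in_vecs: "encode n a u \<in> vecs (2 * n)"
  by (simp add: vecs_def encode_def)

lemma encode_eq_0_iff:
  assumes "u \<in> vecs n"
  shows "encode n a u = (\<lambda>_. 0) \<longleftrightarrow> u = (\<lambda>_. 0)"
proof
  assume zero: "encode n a u = (\<lambda>_. 0)"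
  have "u i = 0" if "i < n" for i
    using fun_cong[OF zero, of i] that by (simp add: encode_def)
  with assms show "u = (\<lambda>_. 0)"
    by (simp add: vecs_eq_0_iff)
qed (simp add: fun_eq_iff encode_def tridiag_mult_def)

lemma sum_lessThan_add: "(\<Sum>i<m + (k::nat). f i) = (\<Sum>i<m. f i) + (\<Sum>i<k. f (m + i))"
  by (induction k) (auto simp: add.assoc)

lemma inner_encode:
  "(\<Sum>i<2 * n. encode n a v i * encode n a u i)
     = (\<Sum>i<n. v i * (u i + tridiag_mult n a (tridiag_mult n a u) i))"
proof -
  let ?T = "tridiag_mult n a"
  have "(\<Sum>i<2 * n. encode n a v i * encode n a u i) = (\<Sum>i<n. v i * u i) + (\<Sum>j<n. ?T v j * ?T u j)"
    by (simp add: mult_2 sum_lessThan_add encode_def)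
  also have "(\<Sum>j<n. ?T v j * ?T u j) = (\<Sum>j<n. \<Sum>i<n. v i * tridiag n a i j * ?T u j)"
    by (simp add: tridiag_mult_def sum_distrib_right)
  also have "\<dots> = (\<Sum>i<n. \<Sum>j<n. v i * (?T u j * tridiag n a j i))"
    by (subst sum.swap) (simp add: tridiag_sym mult_ac)
  also have "\<dots> = (\<Sum>i<n. v i * ?T (?T u) i)"
    by (simp add: tridiag_mult_def sum_distrib_left)
  finally show ?thesis
    by (simp add: sum.distrib distrib_left)
qed

lemma encode_in_dual_iff:
  "encode n a u \<in> dual_code (2 * n) (Ccode n a)
     \<longleftrightarrow> (\<forall>i<n. u i + tridiag_mult n a (tridiag_mult n a u) i = 0)"
proof
  assume dual: "encode n a u \<in> dual_code (2 * n) (Ccode n a)"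
  show "\<forall>i<n. u i + tridiag_mult n a (tridiag_mult n a u) i = 0"
  proof (intro allI impI)
    fix i
    assume "i < n"
    define e where "e = (\<lambda>k. if k = i then 1 else 0 :: 'a)"
    have "e \<in> vecs n"
      using \<open>i < n\<close> by (simp add: e_def vecs_def)
    then have "(\<Sum>k<2 * n. encode n a e k * encode n a u k) = 0"
      using dual by (simp add: dual_code_def Ccode_eq_image)
    with \<open>i < n\<close> show "u i + tridiag_mult n a (tridiag_mult n a u) i = 0"
      by (simp add: inner_encode e_def if_distrib if_distribR cong: if_cong)
  qed
next
  assume "\<forall>i<n. u i + tridiag_mult n a (tridiag_mult n a u) i = 0"
  then show "encode n a u \<in> dual_code (2 * n) (Ccode n a)"
    by (auto simp: dual_code_def Ccode_eq_image inner_encode encode_in_vecs)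
qed

lemma is_LCD_Ccode_iff:
  "is_LCD (2 * n) (Ccode n a)
     \<longleftrightarrow> (\<forall>u\<in>vecs n. (\<forall>i<n. u i + tridiag_mult n a (tridiag_mult n a u) i = 0) \<longrightarrow> u = (\<lambda>_. 0))"
proof -
  have zero: "(\<lambda>_. 0) \<in> vecs n"
    by (simp add: vecs_def)
  then have "(\<lambda>_. 0) \<in> Ccode n a \<inter> dual_code (2 * n) (Ccode n a)"
    using encode_eq_0_iff[OF zero, of a] by (force simp: Ccode_eq_image dual_code_def vecs_def)
  then have "is_LCD (2 * n) (Ccode n a)
      \<longleftrightarrow> (\<forall>u\<in>vecs n. encode n a u \<in> dual_code (2 * n) (Ccode n a) \<longrightarrow> encode n a u = (\<lambda>_. 0))"
    unfolding is_LCD_def by (auto simp: Ccode_eq_image)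
  then show ?thesis
    by (simp add: encode_in_dual_iff encode_eq_0_iff)
qed

lemma tridiag_mult_square_CHAR_2:
  fixes a :: "'a::field"
  assumes "CHAR('a) = 2" and "u \<in> vecs n"
  shows "tridiag_mult n (a + 1) (tridiag_mult n (a + 1) u)
           = (\<lambda>i. u i + tridiag_mult n a (tridiag_mult n a u) i)"
proof -
  let ?T = "tridiag_mult n a" and ?S = "tridiag_mult n (a + 1)"
  have S_eq: "?S v = (\<lambda>i. v i + ?T v i)" if "v \<in> vecs n" for v
    using tridiag_mult_add_diag[OF that, of a 1] by simp
  have "?S (?S u) = (\<lambda>i. (u i + ?T u i) + (?T u i + ?T (?T u) i))"
    by (simp add: S_eq[OF tridiag_mult_in_vecs] S_eq[OF assms(2)] tridiag_mult_add)
  also have "\<dots> = (\<lambda>i. u i + (?T u i + ?T u i) + ?T (?T u) i)"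
    by (simp add: add.assoc)
  finally show ?thesis
    by (simp add: two_eq_0_CHAR_2[OF assms(1)])
qed

lemma is_LCD_Ccode_iff_CHAR_2:
  fixes a :: "'a::field"
  assumes "CHAR('a) = 2"
  shows "is_LCD (2 * n) (Ccode n a)
           \<longleftrightarrow> (\<forall>u\<in>vecs n. tridiag_mult n (a + 1) u = (\<lambda>_. 0) \<longrightarrow> u = (\<lambda>_. 0))"
proof -
  let ?S = "tridiag_mult n (a + 1)"
  have "(\<forall>i<n. u i + tridiag_mult n a (tridiag_mult n a u) i = 0) \<longleftrightarrow> ?S (?S u) = (\<lambda>_. 0)"
    if "u \<in> vecs n" for u
    using vecs_eq_0_iff[OF tridiag_mult_in_vecs, of n "a + 1" "?S u"]
    unfolding tridiag_mult_square_CHAR_2[OF assms that] by simp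
  then have "is_LCD (2 * n) (Ccode n a) \<longleftrightarrow> (\<forall>u\<in>vecs n. ?S (?S u) = (\<lambda>_. 0) \<longrightarrow> u = (\<lambda>_. 0))"
    by (simp add: is_LCD_Ccode_iff)
  also have "\<dots> \<longleftrightarrow> (\<forall>u\<in>vecs n. ?S u = (\<lambda>_. 0) \<longrightarrow> u = (\<lambda>_. 0))"
  proof (intro iffI ballI impI)
    fix u
    assume "\<forall>v\<in>vecs n. ?S (?S v) = (\<lambda>_. 0) \<longrightarrow> v = (\<lambda>_. 0)" "u \<in> vecs n" "?S u = (\<lambda>_. 0)"
    then show "u = (\<lambda>_. 0)"
      by simp
  next
    fix u
    assume "\<forall>v\<in>vecs n. ?S v = (\<lambda>_. 0) \<longrightarrow> v = (\<lambda>_. 0)" "u \<in> vecs n" "?S (?S u) = (\<lambda>_. 0)"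
    then show "u = (\<lambda>_. 0)"
      using tridiag_mult_in_vecs by blast
  qed
  finally show ?thesis .
qed

section \<open>Singular tridiagonal Toeplitz matrices\<close>

text \<open>Dickson polynomials of the second kind, \<open>E\<^sub>k(x) = U\<^sub>k(x/2)\<close> for the Chebyshev \<open>U\<^sub>k\<close>.\<close>

fun dickson_E :: "nat \<Rightarrow> 'a::comm_ring_1 \<Rightarrow> 'a" where
  "dickson_E 0 x = 1"
| "dickson_E (Suc 0) x = x"
| "dickson_E (Suc (Suc k)) x = x * dickson_E (Suc k) x - dickson_E k x"

lemma tridiag_kernel_eq_dickson:
  fixes b :: "'a::field"
  assumes u: "u \<in> vecs n" and ker: "tridiag_mult n b u = (\<lambda>_. 0)" and "k \<le> n"
  shows "u k = u 0 * dickson_E k (- b)"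
proof -
  have row: "b * u i + (if i = 0 then 0 else u (i - 1)) + u (Suc i) = 0" if "i < n" for i
    using tridiag_mult_nth[OF u that] fun_cong[OF ker, of i] by simp
  show ?thesis
    using \<open>k \<le> n\<close>
  proof (induction k rule: induct_nat_012)
    case 1
    then show ?case
      using row[of 0] by (simp add: add_eq_0_iff)
  next
    case (ge2 k)
    have "u (Suc (Suc k)) = - b * u (Suc k) - u k"
      using row[of "Suc k"] ge2.prems by (simp add: add_eq_0_iff)
    with ge2 show ?case
      by (simp add: algebra_simps)
  qed simp
qed

lemma tridiag_singular_iff_dickson:
  fixes b :: "'a::field"
  assumes "n \<ge> 1"
  shows "(\<exists>u\<in>vecs n. u \<noteq> (\<lambda>_. 0) \<and> tridiag_mult n b u = (\<lambda>_. 0)) \<longleftrightarrow> dickson_E n (- b) = 0"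
proof
  assume "\<exists>u\<in>vecs n. u \<noteq> (\<lambda>_. 0) \<and> tridiag_mult n b u = (\<lambda>_. 0)"
  then obtain u where u: "u \<in> vecs n" "u \<noteq> (\<lambda>_. 0)" and ker: "tridiag_mult n b u = (\<lambda>_. 0)"
    by blast
  have "u 0 \<noteq> 0"
  proof
    assume "u 0 = 0"
    have "\<forall>i<n. u i = 0"
      using tridiag_kernel_eq_dickson[OF u(1) ker] \<open>u 0 = 0\<close> by (metis less_imp_le mult_zero_left)
    with u show False
      by (simp add: vecs_eq_0_iff)
  qed
  moreover have "u 0 * dickson_E n (- b) = u n"
    using tridiag_kernel_eq_dickson[OF u(1) ker, of n] by simp
  moreover have "u n = 0"
    using u(1) by (simp add: vecs_def)
  ultimately show "dickson_E n (- b) = 0"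
    by simp
next
  assume E: "dickson_E n (- b) = 0"
  define u where "u = (\<lambda>k. if k < n then dickson_E k (- b) else 0)"
  have u_eq: "u k = dickson_E k (- b)" if "k \<le> n" for k
    using that E by (auto simp: u_def)
  have u: "u \<in> vecs n"
    by (simp add: u_def vecs_def)
  have "u 0 = 1"
    using assms by (simp add: u_def)
  then have "u \<noteq> (\<lambda>_. 0)"
    by auto
  moreover have "tridiag_mult n b u = (\<lambda>_. 0)"
    unfolding vecs_eq_0_iff[OF tridiag_mult_in_vecs]
  proof (intro allI impI)
    fix i
    assume "i < n"
    show "tridiag_mult n b u i = 0"
    proof (cases i)
      case 0
      then show ?thesis
        using \<open>i < n\<close> tridiag_mult_nth[OF u \<open>i < n\<close>] u_eq[of 0] u_eq[of 1] by simp
    next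
      case (Suc j)
      then show ?thesis
        using \<open>i < n\<close> tridiag_mult_nth[OF u \<open>i < n\<close>] u_eq[of j] u_eq[of i] u_eq[of "Suc i"]
        by simp
    qed
  qed
  ultimately show "\<exists>u\<in>vecs n. u \<noteq> (\<lambda>_. 0) \<and> tridiag_mult n b u = (\<lambda>_. 0)"
    using u by blast
qed

lemma dickson_E_add_mult_diff:
  fixes x y :: "'a::comm_ring_1"
  assumes "x * y = 1"
  shows "dickson_E k (x + y) * (x - y) = x ^ (k + 1) - y ^ (k + 1)"
proof (induction k rule: induct_nat_012)
  case (ge2 k)
  have "x * y ^ (k + 2) = y ^ (k + 1)" and "y * x ^ (k + 2) = x ^ (k + 1)"
    using assms by (simp_all add: power_Suc mult.assoc[symmetric] mult.commute[of y x])
  then have step: "(x + y) * (x ^ (k + 2) - y ^ (k + 2)) - (x ^ (k + 1) - y ^ (k + 1))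
      = x ^ (k + 3) - y ^ (k + 3)"
    by (simp add: algebra_simps numeral_3_eq_3 numeral_2_eq_2)
  have "dickson_E (k + 2) (x + y) * (x - y)
      = (x + y) * (dickson_E (k + 1) (x + y) * (x - y)) - dickson_E k (x + y) * (x - y)"
    by (simp add: numeral_2_eq_2 algebra_simps)
  also have "\<dots> = x ^ (k + 3) - y ^ (k + 3)"
    using ge2 step by (simp add: numeral_2_eq_2)
  finally show ?case
    by (simp add: numeral_2_eq_2 numeral_3_eq_3)
qed (simp_all add: algebra_simps power2_eq_square)

lemma dickson_E_even_zero: "dickson_E (2 * j) 0 = (- 1) ^ j"
  by (induction j) (simp_all add: numeral_2_eq_2)

lemma to_ac_dickson_E: "to_ac (dickson_E k x) = dickson_E k (to_ac x)"
  by (induction k x rule: dickson_E.induct) simp_all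

lemma alg_closed_obtain_add_inverse:
  fixes B :: "'a::alg_closed_field"
  obtains y where "y \<noteq> 0" and "B = y + inverse y"
proof -
  obtain y where "poly [:1, - B, 1:] y = 0"
    using alg_closed_imp_poly_has_root[of "[:1, - B, 1:]"] by auto
  then have root: "1 - B * y + y * y = 0"
    by (simp add: algebra_simps)
  then have "y \<noteq> 0"
    by auto
  moreover from root \<open>y \<noteq> 0\<close> have "B = y + inverse y"
    by (simp add: field_simps) algebra
  ultimately show ?thesis
    using that by blast
qed

lemma dickson_E_eq_0_iff_CHAR_2:
  fixes B :: "'a::alg_closed_field"
  assumes char: "CHAR('a) = 2" and "even n"
  shows "dickson_E n B = 0 \<longleftrightarrow> (\<exists>y. y ^ (n + 1) = 1 \<and> y \<noteq> 1 \<and> B = y + inverse y)"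
proof
  assume E: "dickson_E n B = 0"
  obtain y where y: "y \<noteq> 0" "B = y + inverse y"
    by (rule alg_closed_obtain_add_inverse)
  have "B \<noteq> 0"
  proof
    assume "B = 0"
    with \<open>even n\<close> E show False
      by (auto elim!: evenE simp: dickson_E_even_zero)
  qed
  with y have "y \<noteq> 1"
    using add_inverse_eq_0_iff_CHAR_2[OF char] by auto
  have "y ^ (n + 1) - inverse y ^ (n + 1) = 0"
    using dickson_E_add_mult_diff[of y "inverse y" n] y E by simp
  then have "y ^ (n + 1) = inverse (y ^ (n + 1))"
    by (simp add: power_inverse)
  then have "y ^ (n + 1) * y ^ (n + 1) = 1"
    using y(1) by (metis power_not_zero right_inverse)
  then have "y ^ (n + 1) = 1"
    by (simp add: square_eq_1_iff_CHAR_2[OF char])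
  with \<open>y \<noteq> 1\<close> y show "\<exists>y. y ^ (n + 1) = 1 \<and> y \<noteq> 1 \<and> B = y + inverse y"
    by blast
next
  assume "\<exists>y. y ^ (n + 1) = 1 \<and> y \<noteq> 1 \<and> B = y + inverse y"
  then obtain y where y: "y ^ (n + 1) = 1" "y \<noteq> 1" "B = y + inverse y"
    by blast
  then have "y \<noteq> 0"
    by auto
  have "dickson_E n B * (y - inverse y) = y ^ (n + 1) - inverse y ^ (n + 1)"
    using dickson_E_add_mult_diff[of y "inverse y" n] \<open>y \<noteq> 0\<close> y(3) by simp
  also have "\<dots> = 0"
    using y(1) by (metis power_inverse inverse_1 diff_self)
  finally show "dickson_E n B = 0"
    using add_inverse_eq_0_iff_CHAR_2[OF char \<open>y \<noteq> 0\<close>] minus_CHAR_2[OF char] y(2) by simp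
qed

section \<open>Roots of unity\<close>

lemma primitive_root_of_unity_inj_on_power:
  fixes \<theta> :: "'a::field"
  assumes "primitive_root_of_unity k \<theta>"
  shows "inj_on (\<lambda>j. \<theta> ^ j) {..<k}"
proof -
  have False if "i < j" "j < k" "\<theta> ^ i = \<theta> ^ j" for i j
  proof -
    have "\<theta> \<noteq> 0"
      using assms that(2) by (auto simp: primitive_root_of_unity_def power_0_left)
    have "\<theta> ^ i * \<theta> ^ (j - i) = \<theta> ^ j"
      using that(1) by (simp flip: power_add)
    then have "\<theta> ^ (j - i) = 1"
      using \<open>\<theta> \<noteq> 0\<close> that(3) by simp
    with assms that show False
      by (simp add: primitive_root_of_unity_def)
  qed
  then show ?thesis
    by (metis inj_onI lessThan_iff linorder_neqE_nat)
qed

lemma primitive_root_of_unity_obtain_power: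
  fixes \<theta> x :: "'a::field"
  assumes prim: "primitive_root_of_unity k \<theta>" and "k > 0" and "x ^ k = 1"
  obtains j where "j < k" and "x = \<theta> ^ j"
proof -
  define p :: "'a poly" where "p = monom 1 k + [:- 1:]"
  have "degree p = k"
    using \<open>k > 0\<close> by (simp add: p_def degree_add_eq_left degree_monom_eq)
  then have "p \<noteq> 0"
    using \<open>k > 0\<close> by auto
  define R where "R = {z. poly p z = 0}"
  have "finite R" and "card R \<le> k"
    using poly_roots_finite[OF \<open>p \<noteq> 0\<close>] card_poly_roots_bound[OF \<open>p \<noteq> 0\<close>] \<open>degree p = k\<close>
    by (simp_all add: R_def)
  have powers_in_R: "(\<lambda>j. \<theta> ^ j) ` {..<k} \<subseteq> R"
  proof
    fix z
    assume "z \<in> (\<lambda>j. \<theta> ^ j) ` {..<k}"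
    then obtain j where "z = \<theta> ^ j"
      by blast
    then have "z ^ k = (\<theta> ^ k) ^ j"
      by (simp flip: power_mult add: mult.commute)
    with prim show "z \<in> R"
      by (simp add: R_def p_def poly_monom primitive_root_of_unity_def)
  qed
  have "card ((\<lambda>j. \<theta> ^ j) ` {..<k}) = k"
    using card_image[OF primitive_root_of_unity_inj_on_power[OF prim]] by simp
  then have "(\<lambda>j. \<theta> ^ j) ` {..<k} = R"
    using card_seteq[OF \<open>finite R\<close> powers_in_R] \<open>card R \<le> k\<close> by simp
  moreover have "x \<in> R"
    using \<open>x ^ k = 1\<close> by (simp add: R_def p_def poly_monom)
  ultimately show ?thesis
    using that by blast
qed

lemma add_inverse_roots_of_unity_eq:
  fixes \<theta> :: "'a::field"
  assumes prim: "primitive_root_of_unity (n + 1) \<theta>" and "even n"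
  shows "{y + inverse y | y. y ^ (n + 1) = 1 \<and> y \<noteq> 1}
           = {\<theta> ^ i + inverse \<theta> ^ i | i. 1 \<le> i \<and> i \<le> n div 2}"
proof (intro equalityI subsetI)
  fix B :: 'a
  assume "B \<in> {y + inverse y | y. y ^ (n + 1) = 1 \<and> y \<noteq> 1}"
  then obtain y where y: "y ^ (n + 1) = 1" "y \<noteq> 1" and B: "B = y + inverse y"
    by blast
  obtain j where j: "j < n + 1" "y = \<theta> ^ j"
    using primitive_root_of_unity_obtain_power[OF prim _ y(1)] by auto
  have "j \<noteq> 0"
    using y(2) j(2) by (metis power_0)
  show "B \<in> {\<theta> ^ i + inverse \<theta> ^ i | i. 1 \<le> i \<and> i \<le> n div 2}"
  proof (cases "j \<le> n div 2")
    case True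
    with \<open>j \<noteq> 0\<close> B j show ?thesis
      by (auto simp: power_inverse)
  next
    case False
    define i where "i = n + 1 - j"
    have "1 \<le> i" "i \<le> n div 2"
      using False j(1) \<open>even n\<close> by (auto simp: i_def elim!: evenE)
    have "\<theta> ^ i * \<theta> ^ j = 1"
      using prim j(1) by (simp add: i_def primitive_root_of_unity_def flip: power_add)
    then have "inverse (\<theta> ^ j) = \<theta> ^ i" and "inverse (\<theta> ^ i) = \<theta> ^ j"
      by (auto intro: inverse_unique simp: mult.commute)
    with B j have "B = \<theta> ^ i + inverse \<theta> ^ i"
      by (simp add: power_inverse add.commute)
    with \<open>1 \<le> i\<close> \<open>i \<le> n div 2\<close> show ?thesis
      by blast
  qed
next
  fix B :: 'a
  assume "B \<in> {\<theta> ^ i + inverse \<theta> ^ i | i. 1 \<le> i \<and> i \<le> n div 2}"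
  then obtain i where i: "1 \<le> i" "i \<le> n div 2" and B: "B = \<theta> ^ i + inverse \<theta> ^ i"
    by blast
  have "(\<theta> ^ i) ^ (n + 1) = (\<theta> ^ (n + 1)) ^ i"
    by (metis power_mult mult.commute)
  then have "(\<theta> ^ i) ^ (n + 1) = 1"
    using prim by (simp add: primitive_root_of_unity_def)
  moreover have "\<theta> ^ i \<noteq> 1"
    using prim i by (simp add: primitive_root_of_unity_def)
  ultimately show "B \<in> {y + inverse y | y. y ^ (n + 1) = 1 \<and> y \<noteq> 1}"
    using B by (auto simp: power_inverse)
qed

theorem theorem2p3:
  fixes a :: "'a::{finite, field}" and n :: nat and \<theta> :: "'a alg_closure"
  assumes q_pow2: "\<exists>m. (card (UNIV :: 'a set)) = 2 ^ m"
    and n_pos: "n \<ge> 1"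
    and cop: "gcd (n + 1) (card (UNIV :: 'a set)) = 1"
    and prim: "primitive_root_of_unity (n + 1) \<theta>"
  shows "even n \<and>
    (is_LCD (2 * n) (Ccode n a) \<longleftrightarrow>
       to_ac a \<notin> {- 1 + \<theta> ^ i + inverse \<theta> ^ i | i. 1 \<le> i \<and> i \<le> n div 2})"
proof -
  have char: "CHAR('a) = 2"
    using q_pow2 CHAR_eq_2_if_card_eq_power_2 by blast
  have even: "even n"
    using even_if_coprime_card_CHAR_2[OF char] cop by (simp add: coprime_iff_gcd_eq_1)
  have "is_LCD (2 * n) (Ccode n a) \<longleftrightarrow> dickson_E n (- (a + 1)) \<noteq> 0"
    using is_LCD_Ccode_iff_CHAR_2[OF char] tridiag_singular_iff_dickson[OF n_pos] by blast
  also have "\<dots> \<longleftrightarrow> dickson_E n (to_ac a + 1) \<noteq> 0"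
    using to_ac_dickson_E[of n "a + 1", symmetric] by (simp add: uminus_CHAR_2[OF char])
  also have "\<dots> \<longleftrightarrow> to_ac a + 1 \<notin> {\<theta> ^ i + inverse \<theta> ^ i | i. 1 \<le> i \<and> i \<le> n div 2}"
    using dickson_E_eq_0_iff_CHAR_2[of n "to_ac a + 1"] add_inverse_roots_of_unity_eq[OF prim even]
      char even by auto
  also have "\<dots> \<longleftrightarrow> to_ac a \<notin> {- 1 + \<theta> ^ i + inverse \<theta> ^ i | i. 1 \<le> i \<and> i \<le> n div 2}"
    by (auto simp: algebra_simps)
  finally show ?thesis
    using even by blast
qed

end
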